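(* There exist absolute constants $c>0$, $K\ge1$ and $m_0$ such that for every $m\ge m_0$ and every $\epsilon\in\big(2\log m/m^{1/20},\,1\big)$ there is a set system $(U,\mathcal{S})$ with $|\mathcal{S}|=m$ sets covering $U$ and $|U|\le(\log m/\epsilon)^{K}$, such that for every $\epsilon$-differentially private algorithm $M$ that maps each private set $R\subseteq U$ to a (random) assignment $f:U\to\mathcal{S}$ with $e\in f(e)$ for all $e\in U$, there is a nonempty $R\subseteq U$ with $\mathbb{E}\big[|\{f(e):e\in R\}|\big]\ge c\,\frac{\log m}{\epsilon}\,\mathrm{OPT}(R)$, where $f=M(R)$.
   Context: $M$ is $\epsilon$-differentially private if for all $R,R'\subseteq U$ with symmetric difference of size one and all sets $\mathcal{O}$ of outputs, $\Pr[M(R)\in\mathcal{O}]\le e^{\epsilon}\Pr[M(R')\in\mathcal{O}]$. $\mathrm{OPT}(R)$ is the minimum number of sets of $\mathcal{S}$ covering $R$. *)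

theory Defs
  imports "HOL-Probability.Probability"
begin

definition OPT :: "'a set set \<Rightarrow> 'a set \<Rightarrow> nat" where
  "OPT S R = Min {card C | C. C \<subseteq> S \<and> R \<subseteq> \<Union>C}"

definition diff_private :: "real \<Rightarrow> 'a set \<Rightarrow> ('a set \<Rightarrow> 'b pmf) \<Rightarrow> bool" where
  "diff_private eps U M \<longleftrightarrow>
     (\<forall>R R' Os. R \<subseteq> U \<longrightarrow> R' \<subseteq> U \<longrightarrow> card ((R - R') \<union> (R' - R)) = 1 \<longrightarrow>
        measure_pmf.prob (M R) Os \<le> exp eps * measure_pmf.prob (M R') Os)"

definition valid_assignment_mech ::
  "'a set \<Rightarrow> 'a set set \<Rightarrow> ('a set \<Rightarrow> ('a \<Rightarrow> 'a set) pmf) \<Rightarrow> bool" where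
  "valid_assignment_mech U S M \<longleftrightarrow>
     (\<forall>R f e. R \<subseteq> U \<longrightarrow> f \<in> set_pmf (M R) \<longrightarrow> e \<in> U \<longrightarrow> f e \<in> S \<and> e \<in> f e)"

end

theory Submission
  imports Defs
begin

text \<open>
  The family \<open>S\<close> consists of \<open>m\<close> sets of size \<open>k = 64 t\<^sup>2 s\<^sup>2\<close> that pairwise meet in at
  most \<open>s \<approx> log m\<close> points: the graphs of the words of a code with small agreement, found
  greedily as in the Gilbert--Varshamov bound; its universe has \<open>O(k\<^sup>2)\<close> points.
  Let \<open>R\<close> be the point set of an \<open>r\<close>-tuple, \<open>r = 2 t \<approx> log m / (2 eps)\<close>, taken from some
  \<open>A \<in> S\<close>; so \<open>OPT S R \<le> 1\<close>. A valid assignment uses at most \<open>|\<Union>S| \<ll> m\<close> of the sets, and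
  if it does not use \<open>A\<close>, a tuple meeting at most \<open>t\<close> of its sets lies in the union of \<open>t\<close>
  sets each meeting \<open>A\<close> in at most \<open>s\<close> points; this happens for a fraction at most
  \<open>k\<^sup>t (t s / k)\<^sup>r\<close> of the tuples. Averaging over \<open>A\<close> and the tuple, \<open>M {}\<close> rarely covers the
  tuple with at most \<open>t\<close> sets, and group privacy loses only a factor \<open>exp (eps r) \<le> \<surd>m\<close>.
  So some \<open>R\<close> is covered by more than \<open>t \<approx> log m / (4 eps)\<close> sets with probability at least
  \<open>1/2\<close>.
\<close>

lemma diff_private_group:
  assumes dp: "diff_private eps U M" and "finite R" and "R \<subseteq> U"
  shows "measure_pmf.prob (M R) Os \<le> exp (eps * card R) * measure_pmf.prob (M {}) Os"
  using \<open>finite R\<close> \<open>R \<subseteq> U\<close>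
proof (induction R rule: finite_induct)
  case empty
  then show ?case by simp
next
  case (insert x F)
  have "card ((insert x F - F) \<union> (F - insert x F)) = 1"
    using insert.hyps by (simp add: insert_Diff_if)
  then have "measure_pmf.prob (M (insert x F)) Os \<le> exp eps * measure_pmf.prob (M F) Os"
    using dp insert.prems unfolding diff_private_def by blast
  also have "\<dots> \<le> exp eps * (exp (eps * card F) * measure_pmf.prob (M {}) Os)"
    using insert by (intro mult_left_mono) auto
  also have "\<dots> = exp (eps * card (insert x F)) * measure_pmf.prob (M {}) Os"
    using insert.hyps by (simp add: exp_add[symmetric] algebra_simps)
  finally show ?case .
qed

definition words :: "nat \<Rightarrow> nat \<Rightarrow> (nat \<Rightarrow> nat) set" where
  "words k a = PiE {..<k} (\<lambda>_. {..<a})"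

definition agreement :: "nat \<Rightarrow> (nat \<Rightarrow> nat) \<Rightarrow> (nat \<Rightarrow> nat) \<Rightarrow> nat" where
  "agreement k v w = card {i\<in>{..<k}. v i = w i}"

lemma finite_words: "finite (words k a)"
  unfolding words_def by (simp add: finite_PiE)

lemma card_words: "card (words k a) = a ^ k"
  unfolding words_def by (simp add: card_PiE)

lemma words_less: "w \<in> words k a \<Longrightarrow> i < k \<Longrightarrow> w i < a"
  unfolding words_def by (auto dest: PiE_mem)

lemma agreement_commute: "agreement k v w = agreement k w v"
  unfolding agreement_def by (simp add: eq_commute)

lemma agreement_self: "agreement k v v = k"
  unfolding agreement_def by simp

lemma card_words_agreeing_on_le:
  assumes "I \<subseteq> {..<k}"
  shows "card {w \<in> words k a. \<forall>i\<in>I. w i = v i} \<le> a ^ (k - card I)"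
proof -
  let ?P = "PiE {..<k} (\<lambda>i. if i \<in> I then {v i} else {..<a})"
  have "{w \<in> words k a. \<forall>i\<in>I. w i = v i} \<subseteq> ?P"
  proof
    fix w assume "w \<in> {w \<in> words k a. \<forall>i\<in>I. w i = v i}"
    then have w: "w \<in> PiE {..<k} (\<lambda>_. {..<a})" "\<forall>i\<in>I. w i = v i"
      by (simp_all add: words_def)
    show "w \<in> ?P"
      by (rule PiE_I) (use PiE_mem[OF w(1)] PiE_arb[OF w(1)] w(2) in auto)
  qed
  then have "card {w \<in> words k a. \<forall>i\<in>I. w i = v i} \<le> card ?P"
    by (rule card_mono[rotated]) (rule finite_PiE; simp)
  also have "card ?P = (\<Prod>i\<in>{..<k}. if i \<in> I then 1 else a)"
    by (simp add: card_PiE) (rule prod.cong; simp)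
  also have "\<dots> = a ^ card ({..<k} - I)"
    by (simp add: prod.If_cases Diff_eq)
  also have "card ({..<k} - I) = k - card I"
    using assms by (simp add: card_Diff_subset finite_subset)
  finally show ?thesis .
qed

lemma card_words_agreement_gt_le:
  assumes "s < k"
  shows "card {w \<in> words k a. s < agreement k v w} \<le> (k choose (s+1)) * a ^ (k - (s+1))"
proof -
  let ?Is = "{I. I \<subseteq> {..<k} \<and> card I = s + 1}"
  let ?Agree = "\<lambda>I. {w \<in> words k a. \<forall>i\<in>I. w i = v i}"
  have "{w \<in> words k a. s < agreement k v w} \<subseteq> (\<Union>I\<in>?Is. ?Agree I)"
  proof
    fix w assume w: "w \<in> {w \<in> words k a. s < agreement k v w}"
    then have "s + 1 \<le> card {i\<in>{..<k}. v i = w i}"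
      unfolding agreement_def by simp
    then obtain I where "I \<subseteq> {i\<in>{..<k}. v i = w i}" "card I = s + 1"
      by (rule obtain_subset_with_card_n)
    with w show "w \<in> (\<Union>I\<in>?Is. ?Agree I)"
      by (intro UN_I[of I]) auto
  qed
  moreover have "finite (\<Union>I\<in>?Is. ?Agree I)"
    by (rule finite_subset[OF _ finite_words]) blast
  ultimately have "card {w \<in> words k a. s < agreement k v w} \<le> card (\<Union>I\<in>?Is. ?Agree I)"
    by (rule card_mono[rotated])
  also have "\<dots> \<le> (\<Sum>I\<in>?Is. card (?Agree I))"
    by (rule card_UN_le, rule finite_subset[of _ "Pow {..<k}"]) auto
  also have "\<dots> \<le> (\<Sum>I\<in>?Is. a ^ (k - (s+1)))"
    by (rule sum_mono) (metis (mono_tags, lifting) card_words_agreeing_on_le mem_Collect_eq)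
  also have "\<dots> = (k choose (s+1)) * a ^ (k - (s+1))"
    using n_subsets[of "{..<k}" "s+1"] by simp
  finally show ?thesis .
qed

lemma exists_word_far_from_code:
  assumes "W \<subseteq> words k a" and "s < k"
    and "card W * ((k choose (s+1)) * a ^ (k - (s+1))) < a ^ k"
  obtains w where "w \<in> words k a" "\<forall>v\<in>W. agreement k v w \<le> s"
proof -
  let ?Close = "\<Union>v\<in>W. {w \<in> words k a. s < agreement k v w}"
  have finW: "finite W"
    using assms(1) finite_subset finite_words by blast
  have "card ?Close \<le> (\<Sum>v\<in>W. card {w \<in> words k a. s < agreement k v w})"
    by (rule card_UN_le[OF finW])
  also have "\<dots> \<le> (\<Sum>v\<in>W. (k choose (s+1)) * a ^ (k - (s+1)))"
    by (rule sum_mono) (rule card_words_agreement_gt_le[OF assms(2)])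
  also have "\<dots> < card (words k a)"
    using assms(3) by (simp add: card_words)
  finally have "?Close \<noteq> words k a"
    by auto
  moreover have "?Close \<subseteq> words k a"
    by blast
  ultimately obtain w where "w \<in> words k a" "w \<notin> ?Close"
    by blast
  then show ?thesis
    using that by (auto simp: not_less)
qed

lemma exists_code_small_agreement:
  assumes "s < k" and "0 < a"
    and "m * ((k choose (s+1)) * a ^ (k - (s+1))) \<le> a ^ k"
  obtains W where "W \<subseteq> words k a" "card W = m"
    "\<forall>v\<in>W. \<forall>w\<in>W. v \<noteq> w \<longrightarrow> agreement k v w \<le> s"
proof -
  have "j \<le> m \<Longrightarrow> \<exists>W. W \<subseteq> words k a \<and> card W = j \<and>
      (\<forall>v\<in>W. \<forall>w\<in>W. v \<noteq> w \<longrightarrow> agreement k v w \<le> s)" for j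
  proof (induction j)
    case 0
    then show ?case by (intro exI[of _ "{}"]) auto
  next
    case (Suc j)
    then obtain W where W: "W \<subseteq> words k a" "card W = j"
      "\<forall>v\<in>W. \<forall>w\<in>W. v \<noteq> w \<longrightarrow> agreement k v w \<le> s" by auto
    have "0 < (k choose (s+1)) * a ^ (k - (s+1))"
      using assms(1,2) by simp
    then have "card W * ((k choose (s+1)) * a ^ (k - (s+1))) < a ^ k"
      using W(2) Suc.prems assms(3) by (meson Suc_le_lessD mult_less_mono1 order_less_le_trans)
    then obtain w where w: "w \<in> words k a" "\<forall>v\<in>W. agreement k v w \<le> s"
      using exists_word_far_from_code[OF W(1) assms(1)] by blast
    then have "w \<notin> W"
      using assms(1) agreement_self by (metis not_le)
    moreover have "finite W"
      using W(1) finite_subset finite_words by blast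
    ultimately show ?case
      using W w by (intro exI[of _ "insert w W"]) (auto simp: agreement_commute)
  qed
  then show ?thesis
    using that by blast
qed

lemma mult_add_less_eq_mult_addD:
  fixes a i j x y :: nat
  assumes "x < a" "y < a" "i * a + x = j * a + y"
  shows "i = j" "x = y"
proof -
  have "(i * a + x) div a = i" "(i * a + x) mod a = x"
    "(j * a + y) div a = j" "(j * a + y) mod a = y"
    using assms(1,2) by auto
  then show "i = j" "x = y"
    using assms(3) by metis+
qed

text \<open>The graph \<open>{(i, w i) | i < k}\<close> of a word, as a set of cells of the \<open>k \<times> a\<close> grid
  numbered row by row.\<close>
definition word_graph :: "nat \<Rightarrow> nat \<Rightarrow> (nat \<Rightarrow> nat) \<Rightarrow> nat set" where
  "word_graph k a w = (\<lambda>i. i * a + w i) ` {..<k}"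

lemma card_word_graph:
  assumes "w \<in> words k a"
  shows "card (word_graph k a w) = k"
proof -
  have "inj_on (\<lambda>i. i * a + w i) {..<k}"
    using assms by (intro inj_onI) (metis lessThan_iff words_less mult_add_less_eq_mult_addD(1))
  then show ?thesis
    unfolding word_graph_def by (simp add: card_image)
qed

lemma card_word_graph_Int_le:
  assumes "v \<in> words k a" "w \<in> words k a"
  shows "card (word_graph k a v \<inter> word_graph k a w) \<le> agreement k v w"
proof -
  have "word_graph k a v \<inter> word_graph k a w \<subseteq> (\<lambda>i. i * a + v i) ` {i\<in>{..<k}. v i = w i}"
  proof
    fix x assume "x \<in> word_graph k a v \<inter> word_graph k a w"
    then obtain i j where "i < k" "j < k" "x = i * a + v i" "x = j * a + w j"
      unfolding word_graph_def by auto
    moreover from this have "i = j" "v i = w j"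
      using assms words_less mult_add_less_eq_mult_addD by metis+
    ultimately show "x \<in> (\<lambda>i. i * a + v i) ` {i\<in>{..<k}. v i = w i}"
      by blast
  qed
  then have "card (word_graph k a v \<inter> word_graph k a w)
      \<le> card ((\<lambda>i. i * a + v i) ` {i\<in>{..<k}. v i = w i})"
    by (intro card_mono) auto
  also have "\<dots> \<le> agreement k v w"
    unfolding agreement_def by (rule card_image_le) simp
  finally show ?thesis .
qed

lemma inj_on_word_graph: "inj_on (word_graph k a) (words k a)"
proof (rule inj_onI)
  fix v w assume v: "v \<in> words k a" and w: "w \<in> words k a"
    and eq: "word_graph k a v = word_graph k a w"
  show "v = w"
  proof (rule PiE_ext)
    show "v \<in> PiE {..<k} (\<lambda>_. {..<a})" "w \<in> PiE {..<k} (\<lambda>_. {..<a})"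
      using v w by (simp_all add: words_def)
  next
    fix i assume "i \<in> {..<k}"
    then have "i * a + v i \<in> word_graph k a w"
      using eq unfolding word_graph_def by auto
    then obtain j where "j < k" "i * a + v i = j * a + w j"
      unfolding word_graph_def by auto
    then show "v i = w i"
      using v w \<open>i \<in> {..<k}\<close> by (metis lessThan_iff words_less mult_add_less_eq_mult_addD)
  qed
qed

lemma word_graph_subset: "w \<in> words k a \<Longrightarrow> word_graph k a w \<subseteq> {..<k * a}"
proof
  fix x assume "w \<in> words k a" "x \<in> word_graph k a w"
  then obtain i where "i < k" "x = i * a + w i" "w i < a"
    unfolding word_graph_def by (auto dest: words_less)
  then have "x < (i + 1) * a"
    by simp
  also have "\<dots> \<le> k * a"
    using \<open>i < k\<close> by (intro mult_right_mono) auto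
  finally show "x \<in> {..<k * a}"
    by simp
qed

lemma exists_design:
  assumes "s < k" "0 < a" "m * ((k choose (s+1)) * a ^ (k - (s+1))) \<le> a ^ k"
  obtains S :: "nat set set" where "finite S" "card S = m" "\<forall>A\<in>S. finite A \<and> card A = k"
    "\<forall>A\<in>S. \<forall>B\<in>S. A \<noteq> B \<longrightarrow> card (A \<inter> B) \<le> s" "\<Union>S \<subseteq> {..<k * a}"
proof -
  obtain W where W: "W \<subseteq> words k a" "card W = m"
    "\<forall>v\<in>W. \<forall>w\<in>W. v \<noteq> w \<longrightarrow> agreement k v w \<le> s"
    using exists_code_small_agreement[OF assms] by blast
  have inj: "inj_on (word_graph k a) W"
    using inj_on_subset[OF inj_on_word_graph W(1)] .
  show ?thesis
  proof (rule that[of "word_graph k a ` W"])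
    show "finite (word_graph k a ` W)"
      using W(1) finite_subset finite_words by blast
    show "card (word_graph k a ` W) = m"
      using card_image[OF inj] W(2) by simp
    show "\<forall>A\<in>word_graph k a ` W. finite A \<and> card A = k"
      using W(1) card_word_graph by (auto simp: word_graph_def)
    show "\<forall>A\<in>word_graph k a ` W. \<forall>B\<in>word_graph k a ` W. A \<noteq> B \<longrightarrow> card (A \<inter> B) \<le> s"
    proof (intro ballI impI)
      fix A B assume "A \<in> word_graph k a ` W" "B \<in> word_graph k a ` W" "A \<noteq> B"
      then obtain v w where "v \<in> W" "w \<in> W" "v \<noteq> w" "A = word_graph k a v" "B = word_graph k a w"
        by blast
      then show "card (A \<inter> B) \<le> s"
        using W card_word_graph_Int_le[of v k a w] by fastforce
    qed
    show "\<Union>(word_graph k a ` W) \<subseteq> {..<k * a}"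
      using W(1) word_graph_subset by blast
  qed
qed

lemma exists_design_pow2:
  assumes "m \<le> 2 ^ s" "s < k"
  obtains S :: "nat set set" where "finite S" "card S = m" "\<forall>A\<in>S. finite A \<and> card A = k"
    "\<forall>A\<in>S. \<forall>B\<in>S. A \<noteq> B \<longrightarrow> card (A \<inter> B) \<le> s" "card (\<Union>S) \<le> 2 * k^2"
proof -
  have "m * ((k choose (s+1)) * (2*k) ^ (k - (s+1))) \<le> 2 ^ (s+1) * (k ^ (s+1) * (2*k) ^ (k - (s+1)))"
    using assms binomial_le_pow[of "s+1" k] by (intro mult_mono) auto
  also have "\<dots> = (2*k) ^ (s + 1 + (k - (s+1)))"
    by (simp add: power_mult_distrib power_add)
  also have "\<dots> = (2*k) ^ k"
    using assms(2) by simp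
  finally have big: "m * ((k choose (s+1)) * (2*k) ^ (k - (s+1))) \<le> (2*k) ^ k" .
  obtain S :: "nat set set" where S: "finite S" "card S = m" "\<forall>A\<in>S. finite A \<and> card A = k"
    "\<forall>A\<in>S. \<forall>B\<in>S. A \<noteq> B \<longrightarrow> card (A \<inter> B) \<le> s" "\<Union>S \<subseteq> {..<k * (2*k)}"
    by (rule exists_design[OF assms(2) _ big]) (use assms(2) in auto)
  moreover have "card (\<Union>S) \<le> 2 * k^2"
    using card_mono[OF _ S(5)] by (simp add: power2_eq_square)
  ultimately show ?thesis
    using that by blast
qed

lemma card_Int_Union_le:
  assumes "finite T" and "\<And>B. B \<in> T \<Longrightarrow> card (A \<inter> B) \<le> s"
  shows "card (A \<inter> \<Union>T) \<le> card T * s"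
proof -
  have "A \<inter> \<Union>T = (\<Union>B\<in>T. A \<inter> B)"
    by blast
  then have "card (A \<inter> \<Union>T) = card (\<Union>B\<in>T. A \<inter> B)"
    by simp
  also have "\<dots> \<le> (\<Sum>B\<in>T. card (A \<inter> B))"
    by (rule card_UN_le[OF assms(1)])
  also have "\<dots> \<le> (\<Sum>B\<in>T. s)"
    by (rule sum_mono) (rule assms(2))
  also have "\<dots> = card T * s"
    by simp
  finally show ?thesis .
qed

lemma card_le_card_image_mult:
  assumes "finite A" "\<And>e. e \<in> A \<Longrightarrow> e \<in> f e" "\<And>e. e \<in> A \<Longrightarrow> card (A \<inter> f e) \<le> s"
  shows "card A \<le> card (f ` A) * s"
proof -
  have "card A \<le> card (A \<inter> \<Union>(f ` A))"
    using assms(1,2) by (intro card_mono) auto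
  also have "\<dots> \<le> card (f ` A) * s"
  proof (rule card_Int_Union_le)
    show "finite (f ` A)"
      using assms(1) by simp
    show "card (A \<inter> B) \<le> s" if "B \<in> f ` A" for B
      using that assms(3) by blast
  qed
  finally show ?thesis .
qed

lemma tuples_few_sets_subset:
  assumes "finite A" "t \<le> card (f ` A)" "\<And>e. e \<in> A \<Longrightarrow> e \<in> f e"
  shows "{g \<in> PiE {..<r} (\<lambda>_. A). card (f ` g ` {..<r}) \<le> t}
    \<subseteq> (\<Union>T\<in>{T. T \<subseteq> f ` A \<and> card T = t}. PiE {..<r} (\<lambda>_. A \<inter> \<Union>T))"
proof
  fix g assume "g \<in> {g \<in> PiE {..<r} (\<lambda>_. A). card (f ` g ` {..<r}) \<le> t}"
  then have g: "g \<in> PiE {..<r} (\<lambda>_. A)" "card (f ` g ` {..<r}) \<le> t"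
    by simp_all
  then have "f ` g ` {..<r} \<subseteq> f ` A"
    by (auto dest: PiE_mem)
  then obtain T where T: "f ` g ` {..<r} \<subseteq> T" "T \<subseteq> f ` A" "card T = t"
    using exists_subset_between[OF g(2) assms(2)] assms(1) by blast
  have "g i \<in> A \<inter> \<Union>T" if "i < r" for i
  proof -
    have "g i \<in> A"
      using PiE_mem[OF g(1)] that by simp
    moreover have "f (g i) \<in> T"
      using T(1) that by blast
    ultimately show ?thesis
      using assms(3) by blast
  qed
  then have "g \<in> PiE {..<r} (\<lambda>_. A \<inter> \<Union>T)"
    using PiE_arb[OF g(1)] by (intro PiE_I) auto
  with T(2,3) show "g \<in> (\<Union>T\<in>{T. T \<subseteq> f ` A \<and> card T = t}. PiE {..<r} (\<lambda>_. A \<inter> \<Union>T))"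
    by blast
qed

text \<open>Covering \<open>A\<close> needs more than \<open>t\<close> of the sets \<open>f e\<close>, so an \<open>r\<close>-tuple from \<open>A\<close> that
  meets at most \<open>t\<close> of them lies in the union of \<open>t\<close> of them, which has at most \<open>t s\<close>
  points of \<open>A\<close>.\<close>
lemma card_tuples_few_sets_le:
  fixes f :: "'a \<Rightarrow> 'a set"
  assumes "finite A" "card A = k" and mem: "\<And>e. e \<in> A \<Longrightarrow> e \<in> f e"
    and small: "\<And>e. e \<in> A \<Longrightarrow> card (A \<inter> f e) \<le> s" and "t * s < k"
  shows "card {g \<in> PiE {..<r} (\<lambda>_. A). card (f ` g ` {..<r}) \<le> t} \<le> k ^ t * (t * s) ^ r"
proof -
  let ?Ts = "{T. T \<subseteq> f ` A \<and> card T = t}"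
  have "t * s < card (f ` A) * s"
    using card_le_card_image_mult[OF assms(1) mem small] assms(2,5) by linarith
  then have t_le: "t \<le> card (f ` A)"
    by (simp add: mult_less_cancel2)
  have finTs: "finite ?Ts"
    by (rule finite_subset[of _ "Pow (f ` A)"]) (use assms(1) in auto)
  have "card {g \<in> PiE {..<r} (\<lambda>_. A). card (f ` g ` {..<r}) \<le> t}
      \<le> card (\<Union>T\<in>?Ts. PiE {..<r} (\<lambda>_. A \<inter> \<Union>T))"
    by (rule card_mono[OF _ tuples_few_sets_subset[OF assms(1) t_le mem]])
      (use finTs assms(1) in \<open>simp add: finite_PiE\<close>)
  also have "\<dots> \<le> (\<Sum>T\<in>?Ts. card (PiE {..<r} (\<lambda>_. A \<inter> \<Union>T)))"
    by (rule card_UN_le[OF finTs])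
  also have "\<dots> \<le> (\<Sum>T\<in>?Ts. (t * s) ^ r)"
  proof (rule sum_mono)
    fix T assume "T \<in> ?Ts"
    then have T: "T \<subseteq> f ` A" "card T = t"
      by simp_all
    then have "finite T"
      using assms(1) finite_subset by blast
    have "card (A \<inter> \<Union>T) \<le> card T * s"
    proof (rule card_Int_Union_le[OF \<open>finite T\<close>])
      show "card (A \<inter> B) \<le> s" if "B \<in> T" for B
        using that T(1) small by blast
    qed
    then have "card (A \<inter> \<Union>T) \<le> t * s"
      using T(2) by simp
    then show "card (PiE {..<r} (\<lambda>_. A \<inter> \<Union>T)) \<le> (t * s) ^ r"
      by (simp add: card_PiE power_mono)
  qed
  also have "\<dots> = (card (f ` A) choose t) * (t * s) ^ r"
    using n_subsets[of "f ` A" t] assms(1) by simp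
  also have "\<dots> \<le> card (f ` A) ^ t * (t * s) ^ r"
    using binomial_le_pow[OF t_le] by simp
  also have "\<dots> \<le> k ^ t * (t * s) ^ r"
    using card_image_le[OF assms(1), of f] assms(2) by (simp add: power_mono)
  finally show ?thesis .
qed

lemma card_tuples_few_sets_le_if_unused:
  fixes f :: "'a \<Rightarrow> 'a set"
  assumes "A \<in> S" "A \<notin> f ` \<Union>S" and sizes: "\<And>A. A \<in> S \<Longrightarrow> finite A \<and> card A = k"
    and inter: "\<And>A B. A \<in> S \<Longrightarrow> B \<in> S \<Longrightarrow> A \<noteq> B \<Longrightarrow> card (A \<inter> B) \<le> s"
    and valid: "\<And>e. e \<in> \<Union>S \<Longrightarrow> f e \<in> S \<and> e \<in> f e" and "t * s < k"
  shows "card {g \<in> PiE {..<r} (\<lambda>_. A). card (f ` g ` {..<r}) \<le> t} \<le> k ^ t * (t * s) ^ r"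
proof (rule card_tuples_few_sets_le)
  show "finite A" "card A = k"
    using sizes[OF assms(1)] by simp_all
  fix e assume "e \<in> A"
  then have "e \<in> \<Union>S"
    using assms(1) by blast
  then have "f e \<in> S" "e \<in> f e"
    using valid by auto
  moreover from this \<open>e \<in> \<Union>S\<close> have "f e \<noteq> A"
    using assms(2) by blast
  ultimately show "e \<in> f e" "card (A \<inter> f e) \<le> s"
    using inter[OF assms(1), of "f e"] by (simp_all add: Int_commute)
qed (rule \<open>t * s < k\<close>)

text \<open>An assignment uses at most \<open>|\<Union>S|\<close> of the sets; on the tuples from an unused set it
  meets at most \<open>t\<close> sets only rarely.\<close>
lemma card_pairs_few_sets_le:
  fixes f :: "'a \<Rightarrow> 'a set"
  assumes "finite S" "card S = m" and sizes: "\<And>A. A \<in> S \<Longrightarrow> finite A \<and> card A = k"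
    and inter: "\<And>A B. A \<in> S \<Longrightarrow> B \<in> S \<Longrightarrow> A \<noteq> B \<Longrightarrow> card (A \<inter> B) \<le> s"
    and valid: "\<And>e. e \<in> \<Union>S \<Longrightarrow> f e \<in> S \<and> e \<in> f e" and "t * s < k"
  shows "card {d \<in> Sigma S (\<lambda>A. PiE {..<r} (\<lambda>_. A)). card (f ` snd d ` {..<r}) \<le> t}
    \<le> card (\<Union>S) * k ^ r + m * (k ^ t * (t * s) ^ r)"
proof -
  let ?Few = "\<lambda>A. {g \<in> PiE {..<r} (\<lambda>_. A). card (f ` g ` {..<r}) \<le> t}"
  let ?Used = "f ` \<Union>S"
  have finU: "finite (\<Union>S)"
    using assms(1) sizes by blast
  have "{d \<in> Sigma S B. Q (snd d)} = Sigma S (\<lambda>A. {g \<in> B A. Q g})" for B Q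
    by auto
  then have "{d \<in> Sigma S (\<lambda>A. PiE {..<r} (\<lambda>_. A)). card (f ` snd d ` {..<r}) \<le> t} = Sigma S ?Few" .
  moreover have "card (Sigma S ?Few) = (\<Sum>A\<in>S. card (?Few A))"
    using assms(1) sizes by (intro card_SigmaI) (simp_all add: finite_PiE)
  moreover have "card (?Few A) \<le> (if A \<in> ?Used then k ^ r else k ^ t * (t * s) ^ r)"
    if "A \<in> S" for A
  proof -
    have "card (?Few A) \<le> card (PiE {..<r} (\<lambda>_. A))"
      using sizes[OF \<open>A \<in> S\<close>] by (intro card_mono) (simp_all add: finite_PiE)
    then show ?thesis
      using sizes[OF \<open>A \<in> S\<close>] card_tuples_few_sets_le_if_unused[OF \<open>A \<in> S\<close> _ sizes inter valid
          \<open>t * s < k\<close>, of r]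
      by (simp add: card_PiE)
  qed
  ultimately have "card {d \<in> Sigma S (\<lambda>A. PiE {..<r} (\<lambda>_. A)). card (f ` snd d ` {..<r}) \<le> t}
      \<le> (\<Sum>A\<in>S. if A \<in> ?Used then k ^ r else k ^ t * (t * s) ^ r)"
    by (simp add: sum_mono)
  also have "\<dots> = card (S \<inter> ?Used) * k ^ r + card (S - ?Used) * (k ^ t * (t * s) ^ r)"
    using sum.If_cases[OF assms(1), of "\<lambda>A. A \<in> ?Used" "\<lambda>_. k ^ r" "\<lambda>_. k ^ t * (t * s) ^ r"]
    by (simp add: Diff_eq)
  also have "\<dots> \<le> card (\<Union>S) * k ^ r + m * (k ^ t * (t * s) ^ r)"
  proof (intro add_mono mult_right_mono)
    show "card (S \<inter> ?Used) \<le> card (\<Union>S)"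
      using card_mono[of ?Used "S \<inter> ?Used"] card_image_le[OF finU, of f] finU by auto
    show "card (S - ?Used) \<le> m"
      using card_mono[of S "S - ?Used"] assms(1,2) by auto
  qed auto
  finally show ?thesis .
qed

lemma sum_prob_le_of_card_le:
  assumes "finite D" and "\<And>x. x \<in> set_pmf p \<Longrightarrow> card {d\<in>D. x \<in> B d} \<le> N"
  shows "(\<Sum>d\<in>D. measure_pmf.prob p (B d)) \<le> real N"
proof -
  have int: "integrable (measure_pmf p) (indicator (B d) :: _ \<Rightarrow> real)" for d
    by (simp add: integrable_indicator_iff measure_pmf.emeasure_finite less_top[symmetric])
  have "(\<Sum>d\<in>D. measure_pmf.prob p (B d))
      = (\<Sum>d\<in>D. measure_pmf.expectation p (indicator (B d)))"
    by simp
  also have "\<dots> = measure_pmf.expectation p (\<lambda>x. \<Sum>d\<in>D. indicator (B d) x)"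
    using int by simp
  also have "\<dots> \<le> real N"
  proof (rule measure_pmf.integral_le_const)
    show "integrable (measure_pmf p) (\<lambda>x. \<Sum>d\<in>D. indicator (B d) x :: real)"
      by (intro Bochner_Integration.integrable_sum int)
    show "AE x in measure_pmf p. (\<Sum>d\<in>D. indicator (B d) x) \<le> real N"
    proof (rule AE_pmfI)
      fix x assume "x \<in> set_pmf p"
      have "(\<Sum>d\<in>D. indicator (B d) x :: real) = real (card {d\<in>D. x \<in> B d})"
        using assms(1) by (simp add: indicator_def sum.If_cases Int_def)
      then show "(\<Sum>d\<in>D. indicator (B d) x) \<le> real N"
        using assms(2)[OF \<open>x \<in> set_pmf p\<close>] by simp
    qed
  qed
  finally show ?thesis .
qed

lemma exists_le_average:
  fixes f :: "'a \<Rightarrow> real"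
  assumes "finite D" "D \<noteq> {}"
  obtains d where "d \<in> D" "f d \<le> sum f D / card D"
proof -
  have "Min (f ` D) \<in> f ` D"
    using assms by (intro Min_in) auto
  then obtain d where d: "d \<in> D" "f d = Min (f ` D)"
    by auto
  have "real (card D) * f d \<le> sum f D"
    using d assms by (intro sum_bounded_below) simp
  then show ?thesis
    using that[OF d(1)] assms by (simp add: field_simps card_gt_0_iff)
qed

lemma expectation_card_image_ge:
  fixes p :: "('a \<Rightarrow> 'b) pmf"
  assumes "finite R" and "measure_pmf.prob p {f. card (f ` R) \<le> t} \<le> 1/2"
  shows "(real t + 1) / 2 \<le> measure_pmf.expectation p (\<lambda>f. real (card (f ` R)))"
proof -
  let ?X = "\<lambda>f. real (card (f ` R))"
  have int: "integrable p ?X"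
    by (rule measure_pmf.integrable_const_bound[where B = "real (card R)"])
      (simp_all add: card_image_le[OF assms(1)])
  have "measure_pmf.prob p (- {f. card (f ` R) \<le> t}) = 1 - measure_pmf.prob p {f. card (f ` R) \<le> t}"
    using measure_pmf.prob_compl[of "{f. card (f ` R) \<le> t}" p] by (simp add: Compl_eq_Diff_UNIV)
  moreover have "- {f. card (f ` R) \<le> t} = {f \<in> space p. real t + 1 \<le> ?X f}"
    by auto
  ultimately have "1/2 \<le> measure_pmf.prob p {f \<in> space p. real t + 1 \<le> ?X f}"
    using assms(2) by simp
  also have "\<dots> \<le> measure_pmf.expectation p ?X / (real t + 1)"
    by (rule integral_Markov_inequality_measure[OF int]) simp_all
  finally show ?thesis
    by (simp add: field_simps)
qed

lemma OPT_le_one: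
  assumes "finite S" "A \<in> S" "R \<subseteq> A"
  shows "OPT S R \<le> 1"
proof -
  let ?Sizes = "{card C | C. C \<subseteq> S \<and> R \<subseteq> \<Union>C}"
  have "?Sizes \<subseteq> card ` Pow S"
    by (auto simp only: Pow_iff image_iff)
  then have "finite ?Sizes"
    using assms(1) finite_subset by blast
  moreover have "card {A} \<in> ?Sizes"
    using assms(2,3) by (intro CollectI exI[of _ "{A}"]) simp
  ultimately have "Min ?Sizes \<le> card {A}"
    by (rule Min_le)
  then show ?thesis
    unfolding OPT_def by simp
qed

lemma exists_tuple_few_sets_unlikely:
  fixes S :: "'a set set" and p :: "('a \<Rightarrow> 'a set) pmf"
  assumes "finite S" "card S = m" "0 < m"
    and sizes: "\<And>A. A \<in> S \<Longrightarrow> finite A \<and> card A = k"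
    and inter: "\<And>A B. A \<in> S \<Longrightarrow> B \<in> S \<Longrightarrow> A \<noteq> B \<Longrightarrow> card (A \<inter> B) \<le> s"
    and "t * s < k"
    and valid: "\<forall>f\<in>set_pmf p. \<forall>e\<in>\<Union>S. f e \<in> S \<and> e \<in> f e"
  obtains A g where "A \<in> S" "g \<in> PiE {..<r} (\<lambda>_. A)"
    "measure_pmf.prob p {f. card (f ` g ` {..<r}) \<le> t}
       \<le> real (card (\<Union>S)) / real m + real k ^ t * (real t * real s) ^ r / real k ^ r"
proof -
  let ?D = "Sigma S (\<lambda>A. PiE {..<r} (\<lambda>_. A))"
  let ?Few = "\<lambda>d. {f. card (f ` snd d ` {..<r}) \<le> t}"
  let ?N = "card (\<Union>S) * k ^ r + m * (k ^ t * (t * s) ^ r)"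
  have finD: "finite ?D"
    using assms(1) sizes by (simp add: finite_PiE)
  have "card ?D = (\<Sum>A\<in>S. card (PiE {..<r} (\<lambda>_. A)))"
    using assms(1) sizes by (intro card_SigmaI) (simp_all add: finite_PiE)
  also have "\<dots> = m * k ^ r"
    using assms(2) sizes by (simp add: card_PiE)
  finally have cD: "card ?D = m * k ^ r" .
  then have "card ?D \<noteq> 0"
    using \<open>0 < m\<close> \<open>t * s < k\<close> by simp
  then have "?D \<noteq> {}"
    by (metis card.empty)
  then obtain d where d: "d \<in> ?D"
    and pd: "measure_pmf.prob p (?Few d) \<le> (\<Sum>d\<in>?D. measure_pmf.prob p (?Few d)) / card ?D"
    by (rule exists_le_average[OF finD])
  have "(\<Sum>d\<in>?D. measure_pmf.prob p (?Few d)) \<le> real ?N"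
  proof (rule sum_prob_le_of_card_le[OF finD])
    fix f assume "f \<in> set_pmf p"
    then have "\<And>e. e \<in> \<Union>S \<Longrightarrow> f e \<in> S \<and> e \<in> f e"
      using valid by blast
    then show "card {d \<in> ?D. f \<in> ?Few d} \<le> ?N"
      using card_pairs_few_sets_le[OF assms(1,2) sizes inter _ \<open>t * s < k\<close>, of f r] by simp
  qed
  with pd have "measure_pmf.prob p (?Few d) \<le> real ?N / card ?D"
    by (meson divide_right_mono of_nat_0_le_iff order_trans)
  also have "\<dots> = real (card (\<Union>S)) / real m + real k ^ t * (real t * real s) ^ r / real k ^ r"
    using cD \<open>0 < m\<close> \<open>t * s < k\<close> by (simp add: field_simps)
  finally have "measure_pmf.prob p (?Few d)
    \<le> real (card (\<Union>S)) / real m + real k ^ t * (real t * real s) ^ r / real k ^ r" .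
  moreover obtain A g where "d = (A, g)" "A \<in> S" "g \<in> PiE {..<r} (\<lambda>_. A)"
    using d by auto
  ultimately show ?thesis
    using that by simp
qed

text \<open>Group privacy transfers the bound from \<open>M {}\<close> to \<open>M R\<close>, where \<open>R\<close> is the point set of
  the tuple, at a cost of \<open>exp (eps * r)\<close>.\<close>
lemma exists_subset_few_sets_unlikely:
  fixes S :: "'a set set" and M :: "'a set \<Rightarrow> ('a \<Rightarrow> 'a set) pmf"
  assumes "finite S" "card S = m" "0 < m"
    and sizes: "\<And>A. A \<in> S \<Longrightarrow> finite A \<and> card A = k"
    and inter: "\<And>A B. A \<in> S \<Longrightarrow> B \<in> S \<Longrightarrow> A \<noteq> B \<Longrightarrow> card (A \<inter> B) \<le> s"
    and "t * s < k" "0 < r" "0 \<le> eps"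
    and dp: "diff_private eps (\<Union>S) M" and va: "valid_assignment_mech (\<Union>S) S M"
  obtains A R where "A \<in> S" "R \<subseteq> A" "R \<noteq> {}"
    "measure_pmf.prob (M R) {f. card (f ` R) \<le> t}
       \<le> exp (eps * r) * (real (card (\<Union>S)) / real m + real k ^ t * (real t * real s) ^ r / real k ^ r)"
proof -
  let ?bound = "real (card (\<Union>S)) / real m + real k ^ t * (real t * real s) ^ r / real k ^ r"
  have valid: "\<forall>f\<in>set_pmf (M {}). \<forall>e\<in>\<Union>S. f e \<in> S \<and> e \<in> f e"
    using va unfolding valid_assignment_mech_def by blast
  obtain A g where A: "A \<in> S" and g: "g \<in> PiE {..<r} (\<lambda>_. A)"
    and few: "measure_pmf.prob (M {}) {f. card (f ` g ` {..<r}) \<le> t} \<le> ?bound"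
    by (rule exists_tuple_few_sets_unlikely[OF assms(1-6) valid])
  let ?R = "g ` {..<r}"
  have "?R \<subseteq> A"
    using g by (auto dest: PiE_mem)
  then have "measure_pmf.prob (M ?R) {f. card (f ` ?R) \<le> t}
      \<le> exp (eps * card ?R) * measure_pmf.prob (M {}) {f. card (f ` ?R) \<le> t}"
    using A by (intro diff_private_group[OF dp]) auto
  also have "\<dots> \<le> exp (eps * r) * ?bound"
  proof (rule mult_mono[OF _ few])
    show "exp (eps * card ?R) \<le> exp (eps * r)"
      using card_image_le[of "{..<r}" g] \<open>0 \<le> eps\<close> by (simp add: mult_left_mono)
  qed simp_all
  moreover have "?R \<noteq> {}"
    using \<open>0 < r\<close> by auto
  ultimately show ?thesis
    using that[OF A \<open>?R \<subseteq> A\<close>] by simp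
qed

lemma expected_sets_lower_bound_for_design:
  fixes S :: "'a set set" and M :: "'a set \<Rightarrow> ('a \<Rightarrow> 'a set) pmf"
  assumes "finite S" "card S = m" "0 < m"
    and "\<And>A. A \<in> S \<Longrightarrow> finite A \<and> card A = k"
    and "\<And>A B. A \<in> S \<Longrightarrow> B \<in> S \<Longrightarrow> A \<noteq> B \<Longrightarrow> card (A \<inter> B) \<le> s"
    and "t * s < k" "0 < r" "0 \<le> eps"
    and "diff_private eps (\<Union>S) M" "valid_assignment_mech (\<Union>S) S M"
    and small: "exp (eps * r) * (real (card (\<Union>S)) / real m + real k ^ t * (real t * real s) ^ r / real k ^ r) \<le> 1/2"
  obtains R where "R \<subseteq> \<Union>S" "R \<noteq> {}" "OPT S R \<le> 1"
    "(real t + 1) / 2 \<le> measure_pmf.expectation (M R) (\<lambda>f. real (card (f ` R)))"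
proof -
  obtain A R where AR: "A \<in> S" "R \<subseteq> A" "R \<noteq> {}"
    and "measure_pmf.prob (M R) {f. card (f ` R) \<le> t}
      \<le> exp (eps * r) * (real (card (\<Union>S)) / real m + real k ^ t * (real t * real s) ^ r / real k ^ r)"
    by (rule exists_subset_few_sets_unlikely[OF assms(1-10)])
  with small have "measure_pmf.prob (M R) {f. card (f ` R) \<le> t} \<le> 1/2"
    by linarith
  moreover have "finite R"
    using AR assms(4) finite_subset by blast
  ultimately have "(real t + 1) / 2 \<le> measure_pmf.expectation (M R) (\<lambda>f. real (card (f ` R)))"
    by (intro expectation_card_image_ge)
  moreover have "R \<subseteq> \<Union>S"
    using AR by blast
  ultimately show ?thesis
    using that AR OPT_le_one[OF assms(1) AR(1,2)] by blast
qed

lemma collision_term_le: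
  fixes eps :: real and t s :: nat
  assumes "1 \<le> t" "1 \<le> s" "0 \<le> eps" "eps \<le> 1"
  defines "k \<equiv> 64 * t^2 * s^2"
  shows "exp (eps * (2*t)) * (real k ^ t * (real t * real s) ^ (2*t) / real k ^ (2*t)) \<le> 1/4"
proof -
  have k: "0 < real k" "real k / 64 = (real t * real s)^2"
    using assms(1,2) by (simp_all add: k_def power_mult_distrib)
  have "real k ^ t * (real t * real s) ^ (2*t) / real k ^ (2*t) = (real k / 64) ^ t / real k ^ t"
    unfolding k(2) by (simp add: power_mult[symmetric] mult_2 power_add)
  also have "\<dots> = (1/64) ^ t"
    using k(1) by (simp add: power_divide)
  finally have collisions: "real k ^ t * (real t * real s) ^ (2*t) / real k ^ (2*t) = (1/64) ^ t" .
  have "exp (eps * (2*t)) \<le> exp (real t * 2)"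
    using mult_right_mono[OF assms(4), of "real (2*t)"] by simp
  also have "\<dots> = exp 2 ^ t"
    by (rule exp_of_nat_mult)
  also have "\<dots> \<le> 9 ^ t"
  proof (rule power_mono)
    have "exp (2::real) = exp 1 * exp 1"
      by (simp add: exp_add[symmetric])
    also have "\<dots> \<le> 3 * 3"
      using exp_le by (intro mult_mono) auto
    finally show "exp (2::real) \<le> 9"
      by simp
  qed simp
  finally have "exp (eps * (2*t)) * (1/64) ^ t \<le> (9/64) ^ t"
    using mult_right_mono[of _ "9 ^ t" "(1/64::real) ^ t"] by (simp add: power_mult_distrib[symmetric])
  also have "\<dots> \<le> 9/64"
    using assms(1) power_decreasing[of 1 t "9/64::real"] by simp
  finally show ?thesis
    using collisions by simp
qed

lemma union_term_le:
  fixes m n :: nat and L x :: real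
  assumes "3 \<le> real m powr (1/20)" "0 < L" "L \<le> real m powr (1/20) / 2"
    and "real n \<le> 512 * L ^ 8" "x \<le> ln (real m) / 2"
  shows "exp x * (real n / real m) \<le> 1/4"
proof -
  define P where "P = real m powr (1/20)"
  have "m \<noteq> 0"
    using assms(1) by (intro notI) simp
  then have "P = exp (ln (real m) / 20)"
    unfolding P_def by (simp add: powr_def)
  then have m: "real m = P ^ 20" and ex: "exp x \<le> P ^ 10"
    using \<open>m \<noteq> 0\<close> assms(5) by (simp_all add: exp_of_nat_mult[symmetric])
  have "3 \<le> P"
    using assms(1) unfolding P_def .
  then have P: "0 < P" "9 \<le> P^2"
    using power_mono[of 3 P 2] by simp_all
  have "exp x * (real n / real m) \<le> P ^ 10 * (512 * L ^ 8 / P ^ 20)"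
    using ex m assms(4) P by (intro mult_mono) (simp_all add: divide_right_mono)
  also have "\<dots> \<le> P ^ 10 * (512 * (P/2) ^ 8 / P ^ 20)"
    using assms(2,3) P unfolding P_def[symmetric]
    by (intro mult_left_mono divide_right_mono power_mono) simp_all
  also have "\<dots> = 2 / P^2"
    using P by (simp add: field_simps power_divide)
  also have "\<dots> \<le> 2 / 9"
    using P by (intro divide_left_mono) simp_all
  finally show ?thesis
    by simp
qed

lemma log_scale_bounds:
  fixes m :: nat and eps :: real
  assumes "exp 3000 \<le> real m" "2 * ln (real m) / real m powr (1/20) < eps" "eps < 1"
  shows "0 < eps" "3000 \<le> ln (real m)" "ln (real m) < ln (real m) / eps"
    "ln (real m) / eps \<le> real m powr (1/20) / 2"
    "3 \<le> real m powr (1/20)"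
proof -
  have m: "0 < real m"
    using assms(1) exp_gt_zero less_le_trans by blast
  then show lm: "3000 \<le> ln (real m)"
    using assms(1) by (metis exp_le_cancel_iff exp_ln)
  have P: "real m powr (1/20) = exp (ln (real m) / 20)"
    using m by (simp add: powr_def)
  have "3 \<le> 1 + ln (real m) / 20"
    using lm by simp
  then show P3: "3 \<le> real m powr (1/20)"
    unfolding P using exp_ge_add_one_self[of "ln (real m) / 20"] by linarith
  have "0 < ln (real m)"
    using lm by linarith
  moreover have "0 < real m powr (1/20)"
    using m by simp
  ultimately have "0 < 2 * ln (real m) / real m powr (1/20)"
    by simp
  then show eps: "0 < eps"
    using assms(2) by linarith
  then show "ln (real m) < ln (real m) / eps"
    using assms(3) lm by (simp add: less_divide_eq)
  have "2 * ln (real m) < eps * real m powr (1/20)"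
    using assms(2) P3 m by (simp add: divide_less_eq mult.commute)
  then show "ln (real m) / eps \<le> real m powr (1/20) / 2"
    using eps by (simp add: divide_le_eq field_simps)
qed

lemma exists_rounded_parameters:
  fixes lm L :: real
  assumes "4 \<le> lm" "lm < L"
  obtains t s :: nat where "1 \<le> t" "real t \<le> L / 4" "L / 4 < real t + 1"
    "1 \<le> s" "real s \<le> 2 * L" "exp lm \<le> 2 ^ s"
proof
  show "1 \<le> nat \<lfloor>L / 4\<rfloor>" "real (nat \<lfloor>L / 4\<rfloor>) \<le> L / 4" "L / 4 < real (nat \<lfloor>L / 4\<rfloor>) + 1"
    using assms by linarith+
  have ln2: "2/3 \<le> ln (2::real)" "ln (2::real) \<le> 1"
    using ln2_ge_two_thirds ln_le_minus_one[of 2] by simp_all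
  have "0 \<le> lm / ln 2"
    using assms ln2 by simp
  then have "real (nat \<lceil>lm / ln 2\<rceil>) \<le> lm / ln 2 + 1"
    using of_int_ceiling_le_add_one[of "lm / ln 2"] by simp
  also have "lm / ln 2 \<le> lm / (2/3)"
    using assms ln2 by (intro divide_left_mono) auto
  finally have "real (nat \<lceil>lm / ln 2\<rceil>) \<le> 3/2 * lm + 1"
    by simp
  then show "real (nat \<lceil>lm / ln 2\<rceil>) \<le> 2 * L"
    using assms by linarith
  have "lm \<le> lm / ln 2"
    using assms ln2 by (simp add: le_divide_eq)
  then show "1 \<le> nat \<lceil>lm / ln 2\<rceil>"
    using assms by linarith
  have "lm / ln 2 \<le> real (nat \<lceil>lm / ln 2\<rceil>)"
    by linarith
  then have "lm \<le> real (nat \<lceil>lm / ln 2\<rceil>) * ln 2"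
    using ln2 by (simp add: divide_le_eq)
  then have "exp lm \<le> exp (real (nat \<lceil>lm / ln 2\<rceil>) * ln 2)"
    by simp
  then show "exp lm \<le> 2 ^ nat \<lceil>lm / ln 2\<rceil>"
    by (simp add: exp_of_nat_mult)
qed

lemma design_size_gt:
  fixes t s :: nat
  assumes "1 \<le> t" "1 \<le> s"
  shows "t * s < 64 * t^2 * s^2" "s < 64 * t^2 * s^2"
proof -
  have "1 \<le> t * s"
    using assms by simp
  then have "t * s < 64 * (t * s)"
    by linarith
  also have "\<dots> \<le> 64 * (t * s) * (t * s)"
    using \<open>1 \<le> t * s\<close> by simp
  finally show "t * s < 64 * t^2 * s^2"
    by (simp add: power2_eq_square ac_simps)
  moreover have "s \<le> t * s"
    using assms(1) by simp
  ultimately show "s < 64 * t^2 * s^2"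
    by linarith
qed

lemma design_universe_bound:
  fixes n t s :: nat and L :: real
  assumes "n \<le> 2 * (64 * t^2 * s^2) ^ 2" "real t \<le> L / 4" "real s \<le> 2 * L"
  shows "real n \<le> 512 * L ^ 8"
proof -
  have "real t ^ 2 \<le> (L/4) ^ 2"
    by (rule power_mono) (use assms in simp_all)
  moreover have "real s ^ 2 \<le> (2 * L) ^ 2"
    by (rule power_mono) (use assms in simp_all)
  ultimately have "real t ^ 2 * real s ^ 2 \<le> (L/4) ^ 2 * (2 * L) ^ 2"
    by (rule mult_mono) simp_all
  then have "real (64 * t^2 * s^2) \<le> 64 * (L/4) ^ 2 * (2 * L) ^ 2"
    by (simp add: ac_simps)
  also have "\<dots> = 16 * L^4"
    by (simp add: power2_eq_square power4_eq_xxxx)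
  finally have "real (64 * t^2 * s^2) ^ 2 \<le> (16 * L^4) ^ 2"
    by (rule power_mono) simp
  also have "\<dots> = 256 * L ^ 8"
    by (simp add: power_mult_distrib power_mult[symmetric])
  finally show ?thesis
    using of_nat_mono[OF assms(1), where 'a=real] by simp
qed

lemma exists_design_at_scale:
  fixes m :: nat and eps :: real
  assumes "exp 3000 \<le> real m" "2 * ln (real m) / real m powr (1/20) < eps" "eps < 1"
  obtains S :: "nat set set" and k s t :: nat
  where "finite S" "card S = m" "\<forall>A\<in>S. finite A \<and> card A = k"
    "\<forall>A\<in>S. \<forall>B\<in>S. A \<noteq> B \<longrightarrow> card (A \<inter> B) \<le> s" "t * s < k" "1 \<le> t"
    "ln (real m) / eps < 4 * (real t + 1)" "real (card (\<Union>S)) \<le> (ln (real m) / eps) powr 9"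
    "exp (eps * real (2 * t)) * (real (card (\<Union>S)) / real m
      + real k ^ t * (real t * real s) ^ (2 * t) / real k ^ (2 * t)) \<le> 1/2"
proof -
  define L where "L = ln (real m) / eps"
  have eps: "0 < eps" and lm: "3000 \<le> ln (real m)" "ln (real m) < L"
    and P: "L \<le> real m powr (1/20) / 2" "3 \<le> real m powr (1/20)"
    using log_scale_bounds[OF assms] by (simp_all add: L_def)
  obtain t s :: nat where t: "1 \<le> t" "real t \<le> L / 4" "L / 4 < real t + 1"
    and s: "1 \<le> s" "real s \<le> 2 * L" "exp (ln (real m)) \<le> 2 ^ s"
    using exists_rounded_parameters[of "ln (real m)" L] lm by auto
  define k where "k = 64 * t^2 * s^2"
  have "t * s < k" "s < k"
    unfolding k_def by (rule design_size_gt[OF t(1) s(1)])+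
  have "0 < m"
    using lm by (intro gr0I) simp
  then have "m \<le> 2 ^ s"
    using s(3) by (metis exp_ln of_nat_0_less_iff of_nat_le_iff of_nat_numeral of_nat_power)
  obtain S :: "nat set set" where S: "finite S" "card S = m" "\<forall>A\<in>S. finite A \<and> card A = k"
    "\<forall>A\<in>S. \<forall>B\<in>S. A \<noteq> B \<longrightarrow> card (A \<inter> B) \<le> s" "card (\<Union>S) \<le> 2 * k^2"
    by (rule exists_design_pow2[OF \<open>m \<le> 2 ^ s\<close> \<open>s < k\<close>])
  have U: "real (card (\<Union>S)) \<le> 512 * L ^ 8"
    using design_universe_bound[OF _ t(2) s(2)] S(5) unfolding k_def .
  also have "\<dots> \<le> L * L ^ 8"
    using lm by (intro mult_right_mono) simp_all
  also have "\<dots> = L powr 9"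
    using lm by (simp add: powr_numeral power_Suc[symmetric])
  finally have "real (card (\<Union>S)) \<le> L powr 9" .
  have "eps * real (2 * t) \<le> ln (real m) / 2"
    using mult_left_mono[OF t(2), of eps] eps by (simp add: L_def)
  then have "exp (eps * real (2 * t)) * (real (card (\<Union>S)) / real m) \<le> 1/4"
    using lm by (intro union_term_le[OF P(2) _ P(1) U]) simp_all
  moreover have "exp (eps * real (2 * t))
      * (real k ^ t * (real t * real s) ^ (2 * t) / real k ^ (2 * t)) \<le> 1/4"
    unfolding k_def using eps assms(3) by (intro collision_term_le[OF t(1) s(1)]) simp_all
  ultimately have "exp (eps * real (2 * t)) * (real (card (\<Union>S)) / real m
      + real k ^ t * (real t * real s) ^ (2 * t) / real k ^ (2 * t)) \<le> 1/2"
    by (simp only: distrib_left)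
  moreover have "ln (real m) / eps < 4 * (real t + 1)"
    using t(3) by (simp add: L_def)
  ultimately show ?thesis
    using that[OF S(1-4) \<open>t * s < k\<close> t(1)] \<open>real (card (\<Union>S)) \<le> L powr 9\<close>
    unfolding L_def by blast
qed

lemma lower_bound_at_scale:
  fixes m :: nat and eps :: real
  assumes "exp 3000 \<le> real m" "2 * ln (real m) / real m powr (1/20) < eps" "eps < 1"
  shows "\<exists>(U::nat set) (S::nat set set).
          finite U \<and> card S = m \<and> (\<forall>A\<in>S. A \<subseteq> U) \<and> \<Union>S = U \<and>
          real (card U) \<le> (ln (real m) / eps) powr 9 \<and>
          (\<forall>M :: nat set \<Rightarrow> (nat \<Rightarrow> nat set) pmf.
             diff_private eps U M \<and> valid_assignment_mech U S M \<longrightarrow>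
             (\<exists>R. R \<subseteq> U \<and> R \<noteq> {} \<and>
                measure_pmf.expectation (M R) (\<lambda>f. real (card (f ` R)))
                  \<ge> 1/8 * (ln (real m) / eps) * real (OPT S R)))"
proof -
  obtain S :: "nat set set" and k s t :: nat
    where S: "finite S" "card S = m" "\<forall>A\<in>S. finite A \<and> card A = k"
      "\<forall>A\<in>S. \<forall>B\<in>S. A \<noteq> B \<longrightarrow> card (A \<inter> B) \<le> s" "t * s < k" "1 \<le> t"
      "ln (real m) / eps < 4 * (real t + 1)" "real (card (\<Union>S)) \<le> (ln (real m) / eps) powr 9"
      and small: "exp (eps * real (2 * t)) * (real (card (\<Union>S)) / real m
        + real k ^ t * (real t * real s) ^ (2 * t) / real k ^ (2 * t)) \<le> 1/2"
    by (rule exists_design_at_scale[OF assms])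
  have eps: "0 < eps"
    using log_scale_bounds[OF assms] by simp
  have "0 < m"
    by (rule ccontr) (use assms(1) in simp)
  show ?thesis
  proof (rule exI[of _ "\<Union>S"], rule exI[of _ S], intro conjI allI impI)
    show "finite (\<Union>S)" "card S = m" "\<forall>A\<in>S. A \<subseteq> \<Union>S" "\<Union>S = \<Union>S"
      "real (card (\<Union>S)) \<le> (ln (real m) / eps) powr 9"
      using S by blast+
    fix M assume "diff_private eps (\<Union>S) M \<and> valid_assignment_mech (\<Union>S) S M"
    then obtain R where R: "R \<subseteq> \<Union>S" "R \<noteq> {}" "OPT S R \<le> 1"
      "(real t + 1) / 2 \<le> measure_pmf.expectation (M R) (\<lambda>f. real (card (f ` R)))"
      using expected_sets_lower_bound_for_design[OF S(1,2) \<open>0 < m\<close> _ _ S(5) _ _ _ _ small]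
        S(3,4,6) eps by auto
    have "1/8 * (ln (real m) / eps) * real (OPT S R) \<le> 1/8 * (ln (real m) / eps)"
      by (rule mult_left_le) (use R(3) eps log_scale_bounds(2)[OF assms] in simp_all)
    also have "\<dots> \<le> (real t + 1) / 2"
      using S(7) by simp
    finally show "\<exists>R. R \<subseteq> \<Union>S \<and> R \<noteq> {} \<and> 1/8 * (ln (real m) / eps) * real (OPT S R)
        \<le> measure_pmf.expectation (M R) (\<lambda>f. real (card (f ` R)))"
      using R by (intro exI[of _ R]) simp
  qed
qed

theorem mainTheorem12:
  "\<exists>(c::real) (K::real) (m0::nat). c > 0 \<and> K \<ge> 1 \<and>
    (\<forall>m::nat. m \<ge> m0 \<longrightarrow>
     (\<forall>eps::real. 2 * ln (real m) / real m powr (1/20) < eps \<and> eps < 1 \<longrightarrow>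
      (\<exists>(U::nat set) (S::nat set set).
          finite U \<and> card S = m \<and> (\<forall>A\<in>S. A \<subseteq> U) \<and> \<Union>S = U \<and>
          real (card U) \<le> (ln (real m) / eps) powr K \<and>
          (\<forall>M :: nat set \<Rightarrow> (nat \<Rightarrow> nat set) pmf.
             diff_private eps U M \<and> valid_assignment_mech U S M \<longrightarrow>
             (\<exists>R. R \<subseteq> U \<and> R \<noteq> {} \<and>
                measure_pmf.expectation (M R) (\<lambda>f. real (card (f ` R)))
                  \<ge> c * (ln (real m) / eps) * real (OPT S R))))))"
proof (rule exI[of _ "1/8"], rule exI[of _ 9], rule exI[of _ "nat \<lceil>exp (3000::real)\<rceil>"],
    intro conjI allI impI lower_bound_at_scale)
  fix m :: nat
  assume "nat \<lceil>exp (3000::real)\<rceil> \<le> m"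
  then show "exp 3000 \<le> real m"
    by linarith
qed simp_all

end
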